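(* Let $p(\cdot),q(\cdot),r(\cdot)\in\mathcal{P}(\mathbb{R}^n)$ satisfy $\frac{1}{r(x)}=\frac{1}{p(x)}+\frac{1}{q(x)}$, and assume either $r(\cdot)<p(\cdot)<\infty$, or $r(\cdot)\le p(\cdot)<\infty$ with $r^+<\infty$. For measurable $f$ set $\|f\|^*_{p(\cdot)}=\sup_{\|g\|_{q(\cdot)}\le1}\|fg\|_{r(\cdot)}$. Then $\|f\|^*_{p(\cdot)}\approx\|f\|_{p(\cdot)}$, i.e. there are constants $c_1,c_2>0$ independent of $f$ with $c_1\|f\|_{p(\cdot)}\le\|f\|^*_{p(\cdot)}\le c_2\|f\|_{p(\cdot)}$.
   Context: $\mathcal{P}(\mathbb{R}^n)$: measurable $p(\cdot):\mathbb{R}^n\to[1,\infty]$; $p^+$ essential supremum. $\|f\|_{p(\cdot)}=\inf\{\lambda>0:\int_{\{p<\infty\}}|f/\lambda|^{p(x)}dx+\|(f/\lambda)\chi_{\{p=\infty\}}\|_\infty\le1\}$. *)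

theory Defs
  imports "HOL-Analysis.Analysis" "HOL-Probability.Essential_Supremum"
begin

definition var_exponent :: "('a::euclidean_space \<Rightarrow> ereal) \<Rightarrow> bool" where
  "var_exponent p \<longleftrightarrow> p \<in> borel_measurable lebesgue \<and> (\<forall>x. 1 \<le> p x)"

definition var_modular :: "('a::euclidean_space \<Rightarrow> ereal) \<Rightarrow> ('a \<Rightarrow> real) \<Rightarrow> ennreal" where
  "var_modular p f =
     (\<integral>\<^sup>+ x \<in> {x. p x < \<infinity>}. ennreal (\<bar>f x\<bar> powr real_of_ereal (p x)) \<partial>lebesgue)
     + esssup lebesgue (\<lambda>x. ennreal \<bar>f x\<bar> * indicator {x. p x = \<infinity>} x)"

text \<open>Luxemburg norm, valued in ennreal (infinite if no admissible lambda exists).\<close>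

definition var_norm :: "('a::euclidean_space \<Rightarrow> ereal) \<Rightarrow> ('a \<Rightarrow> real) \<Rightarrow> ennreal" where
  "var_norm p f = (INF l \<in> {l::real. 0 < l \<and> var_modular p (\<lambda>x. f x / l) \<le> 1}. ennreal l)"

definition var_norm_star ::
  "('a::euclidean_space \<Rightarrow> ereal) \<Rightarrow> ('a \<Rightarrow> ereal) \<Rightarrow> ('a \<Rightarrow> real) \<Rightarrow> ennreal" where
  "var_norm_star q r f =
     (SUP g \<in> {g. g \<in> borel_measurable lebesgue \<and> var_norm q g \<le> 1}. var_norm r (\<lambda>x. f x * g x))"

end

theory Submission
  imports Defs
begin

(*
  Upper bound: Young's inequality with the exponents p/r and q/r gives, pointwise,
  2 |u v / 2|^r <= |u|^p + |v|^q; where q = \<infinity> one has r = p instead, and |g| <= 1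
  almost everywhere there.  Hence the r-modular of f g / (2 a b) is at most 1 whenever the
  modulars of f / a and g / b are, and ||f g||_r <= 2 ||f||_p whenever ||g||_q <= 1.

  Lower bound: if ||f||_p > \<mu>, then the integral of |f / \<mu>|^p exceeds 1, and by monotone
  convergence it still does on a set E where that integral is finite.  Either the part of E
  where q = \<infinity> or the part where q < \<infinity> carries half of it.  On the former, g = 1
  works because r = p there; on the latter, with S the integral over it,
  g = (|f / \<mu>|^p / S)^(1/q) has q-modular 1 and |f g / \<mu>|^r >= min 1 (1/S) |f / \<mu>|^p.
  Either way ||f g||_r >= \<mu> / 2, which gives the constants 1/2 and 2.
*)

lemma powr_half_le:
  fixes x R :: real
  assumes "0 \<le> x" and "1 \<le> R"
  shows "2 * (x / 2) powr R \<le> x powr R"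
proof -
  have "(1/2::real) powr R \<le> (1/2) powr 1"
    using assms(2) by (intro powr_mono') auto
  then have "x powr R * (1/2) powr R \<le> x powr R * (1/2)"
    by (intro mult_left_mono) auto
  then show ?thesis
    using assms(1) by (simp add: powr_mult[symmetric])
qed

lemma young_powr:
  fixes u v P Q R :: real
  assumes "0 \<le> u" "0 \<le> v" "1 \<le> P" "1 \<le> Q" "1 \<le> R"
    and "1/R = 1/P + 1/Q"
  shows "(u * v) powr R \<le> u powr P + v powr Q"
proof -
  have "1/P < 1/R" "1/Q < 1/R"
    using assms by auto
  then have "R < P" "R < Q"
    using assms(3-5) by (auto simp: divide_simps)
  have "u powr R * v powr R \<le> (u powr R) powr (P/R) / (P/R) + (v powr R) powr (Q/R) / (Q/R)"
    using \<open>R < P\<close> \<open>R < Q\<close> assms by (intro Youngs_inequality) (auto simp: field_simps)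
  also have "\<dots> = u powr P * (R/P) + v powr Q * (R/Q)"
    using assms by (simp add: powr_powr)
  also have "\<dots> \<le> u powr P + v powr Q"
    using \<open>R < P\<close> \<open>R < Q\<close> assms by (intro add_mono mult_left_le) auto
  finally show ?thesis
    using assms by (simp add: powr_mult)
qed

lemma powr_mult_dual_powr:
  fixes t S P Q R :: real
  assumes "0 \<le> t" "0 < S" "1 \<le> P" "1 \<le> Q" "1 \<le> R"
    and "1/R = 1/P + 1/Q"
  shows "(t * (t powr P / S) powr (1/Q)) powr R = t powr P * S powr (- (R/Q))"
proof (cases "t = 0")
  case True
  then show ?thesis using assms by simp
next
  case False
  have "R + P * R / Q = P"
    using assms by (simp add: field_simps)
  moreover have "(t * (t powr P / S) powr (1/Q)) powr R = t powr (R + P * R / Q) * S powr (- (R/Q))"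
    using False assms
    by (simp add: powr_mult powr_divide powr_powr powr_minus divide_inverse inverse_powr powr_add mult_ac)
  ultimately show ?thesis by simp
qed

lemma min_le_powr_neg:
  fixes S a :: real
  assumes "0 < S" "0 \<le> a" "a \<le> 1"
  shows "min 1 (1/S) \<le> S powr (- a)"
proof (cases "1 \<le> S")
  case True
  then have "S powr (- 1) \<le> S powr (- a)"
    using assms by (intro powr_mono) auto
  then show ?thesis
    using assms by (simp add: powr_minus_divide)
next
  case False
  then have "S powr 0 \<le> S powr (- a)"
    using assms by (intro powr_mono') auto
  then show ?thesis
    using assms by simp
qed

lemma ennreal_le_mult_of_forall_greater:
  fixes x y :: ennreal and c :: real
  assumes "0 < c" and bound: "\<And>a. 0 < a \<Longrightarrow> x < ennreal a \<Longrightarrow> y \<le> ennreal (c * a)"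
  shows "y \<le> ennreal c * x"
proof (rule ennreal_le_epsilon)
  fix e :: real
  assume "ennreal c * x < top" and "0 < e"
  then obtain n where n: "0 \<le> n" "x = ennreal n"
    using assms(1) by (cases x) (auto simp: ennreal_mult_top)
  define a where "a = n + e / c"
  have "0 < e / c"
    using \<open>0 < e\<close> assms(1) by simp
  then have "0 < a" "x < ennreal a"
    using n by (auto simp: a_def ennreal_less_iff)
  then have "y \<le> ennreal (c * a)"
    by (rule bound)
  also have "c * a = c * n + e"
    using assms(1) by (simp add: a_def field_simps)
  also have "\<dots> = ennreal c * x + ennreal e"
    using n \<open>0 < e\<close> assms(1) by (simp add: ennreal_mult)
  finally show "y \<le> ennreal c * x + ennreal e" .
qed

section \<open>Integrals over parts of the space\<close>

lemma set_nn_integral_bounded_lt_top: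
  fixes F :: "'b \<Rightarrow> real"
  assumes "E \<in> sets M" "emeasure M E < \<infinity>" "\<And>x. x \<in> E \<Longrightarrow> F x \<le> C"
  shows "(\<integral>\<^sup>+x\<in>E. ennreal (F x) \<partial>M) < \<infinity>"
proof -
  have "(\<integral>\<^sup>+x\<in>E. ennreal (F x) \<partial>M) \<le> (\<integral>\<^sup>+x\<in>E. ennreal C \<partial>M)"
    using assms(3) by (intro nn_integral_mono) (auto simp: indicator_def ennreal_leI)
  also have "\<dots> = ennreal C * emeasure M E"
    using assms(1) by (simp add: nn_integral_cmult_indicator)
  also have "\<dots> < \<infinity>"
    using assms(2) by (simp add: ennreal_mult_less_top less_top)
  finally show ?thesis .
qed

lemma nn_integral_gt_restrict_finite:
  fixes F :: "'a::euclidean_space \<Rightarrow> real"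
  assumes [measurable]: "F \<in> borel_measurable lebesgue"
    and "c < (\<integral>\<^sup>+x. ennreal (F x) \<partial>lebesgue)"
  shows "\<exists>E \<in> sets lebesgue. c < (\<integral>\<^sup>+x\<in>E. ennreal (F x) \<partial>lebesgue)
           \<and> (\<integral>\<^sup>+x\<in>E. ennreal (F x) \<partial>lebesgue) < \<infinity>"
proof -
  define E where "E k = {x. F x \<le> real k} \<inter> ball 0 (real k)" for k :: nat
  have E_sets [measurable]: "E k \<in> sets lebesgue" for k
  proof -
    have "{x. F x \<le> real k} = {x \<in> space lebesgue. F x \<le> real k}"
      by simp
    also have "\<dots> \<in> sets lebesgue"
      by measurable
    finally show ?thesis
      unfolding E_def using lmeasurable_ball by (intro sets.Int) auto
  qed
  have "incseq (\<lambda>k x. ennreal (F x) * indicator (E k) x)"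
    by (intro incseq_SucI le_funI mult_left_mono) (auto simp: E_def indicator_def)
  moreover have "(SUP k. ennreal (F x) * indicator (E k) x) = ennreal (F x)" for x
  proof (rule antisym)
    show "(SUP k. ennreal (F x) * indicator (E k) x) \<le> ennreal (F x)"
      by (intro SUP_least) (auto simp: indicator_def)
    obtain k :: nat where "max (F x) (norm x) < real k"
      using reals_Archimedean2 by blast
    then have "x \<in> E k"
      by (auto simp: E_def dist_norm)
    then show "ennreal (F x) \<le> (SUP k. ennreal (F x) * indicator (E k) x)"
      by (intro SUP_upper2[of k]) auto
  qed
  ultimately have "(\<integral>\<^sup>+x. ennreal (F x) \<partial>lebesgue) = (SUP k. \<integral>\<^sup>+x\<in>E k. ennreal (F x) \<partial>lebesgue)"
    using nn_integral_monotone_convergence_SUP[of "\<lambda>k x. ennreal (F x) * indicator (E k) x"]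
    by simp
  then obtain k where "c < (\<integral>\<^sup>+x\<in>E k. ennreal (F x) \<partial>lebesgue)"
    using assms(2) by (auto simp: less_SUP_iff)
  moreover have "emeasure lebesgue (E k) \<le> emeasure lebesgue (ball (0::'a) (real k))"
    unfolding E_def by (intro emeasure_mono) auto
  then have "emeasure lebesgue (E k) < \<infinity>"
    by (rule le_less_trans) (use fmeasurableD2[OF lmeasurable_ball] in \<open>simp add: less_top\<close>)
  then have "(\<integral>\<^sup>+x\<in>E k. ennreal (F x) \<partial>lebesgue) < \<infinity>"
    using E_sets[of k] by (intro set_nn_integral_bounded_lt_top[of _ _ _ "real k"]) (auto simp: E_def)
  ultimately show ?thesis
    using E_sets by blast
qed

lemma nn_integral_half_on_part:
  fixes F :: "'b \<Rightarrow> ennreal"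
  assumes "F \<in> borel_measurable M" "A \<in> sets M" "B \<in> sets M" "A \<inter> B = {}"
    and "1 < (\<integral>\<^sup>+x\<in>A \<union> B. F x \<partial>M)"
  shows "ennreal (1/2) \<le> (\<integral>\<^sup>+x\<in>A. F x \<partial>M) \<or> ennreal (1/2) \<le> (\<integral>\<^sup>+x\<in>B. F x \<partial>M)"
proof (rule ccontr)
  assume "\<not> ?thesis"
  then have "(\<integral>\<^sup>+x\<in>A. F x \<partial>M) + (\<integral>\<^sup>+x\<in>B. F x \<partial>M) < ennreal (1/2) + ennreal (1/2)"
    by (intro add_strict_mono) auto
  also have "\<dots> = 1"
    by (subst ennreal_plus[symmetric]) auto
  finally show False
    using assms nn_integral_disjoint_pair[of F M A B] by simp
qed

section \<open>Modular and Luxemburg norm\<close>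

lemma real_of_ereal_exponent_ge_1:
  fixes p :: ereal
  assumes "1 \<le> p" "p < \<infinity>"
  shows "1 \<le> real_of_ereal p"
  using assms by (cases p) auto

lemma var_modular_finite_exponent:
  fixes p :: "'a::euclidean_space \<Rightarrow> ereal"
  assumes "\<And>x. p x < \<infinity>"
  shows "var_modular p h = (\<integral>\<^sup>+ x. ennreal (\<bar>h x\<bar> powr real_of_ereal (p x)) \<partial>lebesgue)"
proof -
  have "{x. p x < \<infinity>} = UNIV" "{x. p x = \<infinity>} = {}"
    using assms by auto
  moreover have "esssup lebesgue (\<lambda>x::'a. 0::ennreal) = 0"
    using esssup_I[of "\<lambda>x::'a. 0::ennreal" lebesgue 0] by simp
  ultimately show ?thesis
    unfolding var_modular_def by simp
qed

lemma var_modular_le_one_AE_bounded: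
  assumes "var_modular q g \<le> 1"
  shows "AE x in lebesgue. q x = \<infinity> \<longrightarrow> \<bar>g x\<bar> \<le> 1"
proof -
  have "esssup lebesgue (\<lambda>x. ennreal \<bar>g x\<bar> * indicator {x. q x = \<infinity>} x) \<le> 1"
    using assms unfolding var_modular_def
    by (rule order_trans[rotated]) (rule add_increasing; simp)
  then have "AE x in lebesgue. ennreal \<bar>g x\<bar> * indicator {x. q x = \<infinity>} x \<le> 1"
    using esssup_AE[of "\<lambda>x. ennreal \<bar>g x\<bar> * indicator {x. q x = \<infinity>} x" lebesgue]
    by (auto elim: eventually_mono)
  then show ?thesis
    by eventually_elim (auto simp: indicator_def)
qed

lemma var_norm_le_of_modular:
  assumes "0 < l" "var_modular p (\<lambda>x. h x / l) \<le> 1"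
  shows "var_norm p h \<le> ennreal l"
  unfolding var_norm_def using assms by (intro INF_lower) auto

lemma var_modular_divide_antimono:
  fixes q :: "'a::euclidean_space \<Rightarrow> ereal"
  assumes "var_exponent q" and [measurable]: "g \<in> borel_measurable lebesgue"
    and "0 < l" "l \<le> b"
  shows "var_modular q (\<lambda>x. g x / b) \<le> var_modular q (\<lambda>x. g x / l)"
  unfolding var_modular_def
proof (intro add_mono nn_integral_mono esssup_mono)
  note [measurable] = assms(1)[unfolded var_exponent_def, THEN conjunct1]
  fix x
  have le: "\<bar>g x / b\<bar> \<le> \<bar>g x / l\<bar>"
    using assms(3,4) by (simp add: divide_left_mono)
  have "1 \<le> q x"
    using assms(1) unfolding var_exponent_def by blast
  then have "0 \<le> real_of_ereal (q x)"
    by (cases "q x") auto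
  then have "\<bar>g x / b\<bar> powr real_of_ereal (q x) \<le> \<bar>g x / l\<bar> powr real_of_ereal (q x)"
    using le by (intro powr_mono2) auto
  then show "ennreal (\<bar>g x / b\<bar> powr real_of_ereal (q x)) * indicator {x. q x < \<infinity>} x
      \<le> ennreal (\<bar>g x / l\<bar> powr real_of_ereal (q x)) * indicator {x. q x < \<infinity>} x"
    by (intro mult_right_mono) auto
  show "ennreal \<bar>g x / b\<bar> * indicator {x. q x = \<infinity>} x \<le> ennreal \<bar>g x / l\<bar> * indicator {x. q x = \<infinity>} x"
    using le by (intro mult_right_mono) auto
  show "(\<lambda>x. ennreal \<bar>g x / b\<bar> * indicator {x. q x = \<infinity>} x) \<in> borel_measurable lebesgue"
    by measurable
qed

lemma var_modular_le_one_of_norm_less: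
  fixes p :: "'a::euclidean_space \<Rightarrow> ereal"
  assumes "var_exponent p" "h \<in> borel_measurable lebesgue" "var_norm p h < ennreal b"
  shows "var_modular p (\<lambda>x. h x / b) \<le> 1"
proof -
  obtain l where "0 < l" "var_modular p (\<lambda>x. h x / l) \<le> 1" "ennreal l < ennreal b"
    using assms(3) unfolding var_norm_def INF_less_iff by auto
  then show ?thesis
    using var_modular_divide_antimono[OF assms(1,2), of l b] by (auto simp: ennreal_less_iff)
qed

lemma var_modular_mult_ge:
  fixes p :: "'a::euclidean_space \<Rightarrow> ereal"
  assumes "var_exponent p" "\<And>x. p x < \<infinity>" "h \<in> borel_measurable lebesgue" "1 \<le> t"
  shows "ennreal t * var_modular p h \<le> var_modular p (\<lambda>x. t * h x)"
proof -
  note [measurable] = assms(3) assms(1)[unfolded var_exponent_def, THEN conjunct1]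
  have "ennreal t * ennreal (\<bar>h x\<bar> powr real_of_ereal (p x))
      \<le> ennreal (\<bar>t * h x\<bar> powr real_of_ereal (p x))" for x
  proof -
    have "t powr 1 \<le> t powr real_of_ereal (p x)"
      using assms real_of_ereal_exponent_ge_1[of "p x"] unfolding var_exponent_def
      by (intro powr_mono) auto
    then have "t * \<bar>h x\<bar> powr real_of_ereal (p x) \<le> \<bar>t * h x\<bar> powr real_of_ereal (p x)"
      using assms(4) by (simp add: abs_mult powr_mult mult_right_mono)
    then show ?thesis
      using assms(4) by (simp add: ennreal_mult[symmetric])
  qed
  then have "(\<integral>\<^sup>+ x. ennreal t * ennreal (\<bar>h x\<bar> powr real_of_ereal (p x)) \<partial>lebesgue)
      \<le> (\<integral>\<^sup>+ x. ennreal (\<bar>t * h x\<bar> powr real_of_ereal (p x)) \<partial>lebesgue)"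
    by (intro nn_integral_mono)
  then show ?thesis
    by (simp add: var_modular_finite_exponent[OF assms(2)] nn_integral_cmult)
qed

lemma var_norm_ge_of_modular:
  fixes p :: "'a::euclidean_space \<Rightarrow> ereal"
  assumes "var_exponent p" "\<And>x. p x < \<infinity>" "h \<in> borel_measurable lebesgue"
    and "0 < \<mu>" "0 < c" "c \<le> 1" "ennreal c \<le> var_modular p (\<lambda>x. h x / \<mu>)"
  shows "ennreal (c * \<mu>) \<le> var_norm p h"
  unfolding var_norm_def
proof (rule INF_greatest)
  fix l
  assume "l \<in> {l. 0 < l \<and> var_modular p (\<lambda>x. h x / l) \<le> 1}"
  then have "0 < l" and admissible: "var_modular p (\<lambda>x. h x / l) \<le> 1"
    by auto
  show "ennreal (c * \<mu>) \<le> ennreal l"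
  proof (rule ccontr)
    assume "\<not> ?thesis"
    then have "l < c * \<mu>"
      by (metis ennreal_leI not_le)
    moreover have "c * \<mu> \<le> \<mu>"
      using assms(4-6) by (simp add: mult_left_le_one_le)
    ultimately have "l \<le> \<mu>"
      by linarith
    then have "1 < \<mu> / l * c" "1 \<le> \<mu> / l"
      using \<open>l < c * \<mu>\<close> \<open>0 < l\<close> by (auto simp: field_simps)
    have "ennreal (\<mu> / l * c) = ennreal (\<mu> / l) * ennreal c"
      using \<open>0 < l\<close> assms(4,5) by (intro ennreal_mult) auto
    also have "\<dots> \<le> ennreal (\<mu> / l) * var_modular p (\<lambda>x. h x / \<mu>)"
      using assms(7) by (intro mult_left_mono) auto
    also have "\<dots> \<le> var_modular p (\<lambda>x. \<mu> / l * (h x / \<mu>))"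
      using assms(1-3) \<open>1 \<le> \<mu> / l\<close> by (intro var_modular_mult_ge) auto
    also have "(\<lambda>x. \<mu> / l * (h x / \<mu>)) = (\<lambda>x. h x / l)"
      using assms(4) by auto
    finally have "ennreal (\<mu> / l * c) \<le> 1"
      using admissible by (rule order.trans)
    then show False
      using \<open>1 < \<mu> / l * c\<close> by simp
  qed
qed

lemma var_norm_dual_witness_le_one:
  fixes q :: "'a::euclidean_space \<Rightarrow> ereal"
  assumes "var_exponent q" and [measurable]: "F \<in> borel_measurable lebesgue" "A \<in> sets lebesgue"
    and "A \<subseteq> {x. q x < \<infinity>}" "\<And>x. 0 \<le> F x" "0 < S"
    and S: "(\<integral>\<^sup>+x\<in>A. ennreal (F x) \<partial>lebesgue) = ennreal S"
  shows "var_norm q (\<lambda>x. indicator A x * (F x / S) powr (1 / real_of_ereal (q x))) \<le> 1"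
proof -
  note [measurable] = assms(1)[unfolded var_exponent_def, THEN conjunct1]
  define g where "g = (\<lambda>x. indicator A x * (F x / S) powr (1 / real_of_ereal (q x)))"
  have "(\<integral>\<^sup>+ x. ennreal (\<bar>g x / 1\<bar> powr real_of_ereal (q x)) * indicator {x. q x < \<infinity>} x \<partial>lebesgue)
      = (\<integral>\<^sup>+ x. ennreal (1 / S) * (ennreal (F x) * indicator A x) \<partial>lebesgue)"
  proof (intro nn_integral_cong)
    fix x
    show "ennreal (\<bar>g x / 1\<bar> powr real_of_ereal (q x)) * indicator {x. q x < \<infinity>} x
        = ennreal (1 / S) * (ennreal (F x) * indicator A x)"
    proof (cases "x \<in> A")
      case True
      then have "1 \<le> real_of_ereal (q x)"
        using assms(1,4) by (auto simp: var_exponent_def intro: real_of_ereal_exponent_ge_1)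
      then show ?thesis
        using True assms(4-6) by (auto simp: g_def powr_powr ennreal_mult[symmetric])
    qed (simp add: g_def)
  qed
  also have "\<dots> = 1"
    using S \<open>0 < S\<close> by (simp add: nn_integral_cmult ennreal_mult[symmetric])
  moreover have "esssup lebesgue (\<lambda>x. ennreal \<bar>g x / 1\<bar> * indicator {x. q x = \<infinity>} x) \<le> 0"
    using assms(4) by (intro esssup_I) (auto simp: g_def indicator_def)
  ultimately have "var_modular q (\<lambda>x. g x / 1) \<le> 1"
    by (simp add: var_modular_def)
  then show ?thesis
    using var_norm_le_of_modular[of 1 q g] by (simp add: g_def)
qed

lemma var_norm_indicator_le_one:
  fixes q :: "'a::euclidean_space \<Rightarrow> ereal"
  assumes "var_exponent q" "B \<in> sets lebesgue" "B \<subseteq> {x. q x = \<infinity>}"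
  shows "var_norm q (indicator B :: 'a \<Rightarrow> real) \<le> 1"
proof -
  note [measurable] = assms(2) assms(1)[unfolded var_exponent_def, THEN conjunct1]
  have "(\<integral>\<^sup>+x. ennreal (indicator B x powr real_of_ereal (q x)) * indicator {x. q x < \<infinity>} x \<partial>lebesgue)
      = 0"
    using assms(3) by (subst nn_integral_0_iff_AE) (auto simp: indicator_def)
  moreover have "esssup lebesgue (\<lambda>x. ennreal (indicator B x) * indicator {x. q x = \<infinity>} x) \<le> 1"
    by (intro esssup_I) (auto simp: indicator_def)
  ultimately show ?thesis
    using var_norm_le_of_modular[of 1 q "indicator B"] by (simp add: var_modular_def)
qed

lemma var_norm_mult_le_var_norm_star:
  assumes "g \<in> borel_measurable lebesgue" "var_norm q g \<le> 1"
  shows "var_norm r (\<lambda>x. f x * g x) \<le> var_norm_star q r f"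
  unfolding var_norm_star_def using assms by (intro SUP_upper2[of g]) auto

section \<open>Hoelder triples of exponents\<close>

locale holder_triple =
  fixes p q r :: "'a::euclidean_space \<Rightarrow> ereal"
  assumes p_exponent: "var_exponent p" and q_exponent: "var_exponent q"
    and r_exponent: "var_exponent r"
    and p_finite: "\<And>x. p x < \<infinity>"
    and inverse_exponent_sum: "\<And>x. inverse (r x) = inverse (p x) + inverse (q x)"
begin

lemma exponents_measurable [measurable]:
  "p \<in> borel_measurable lebesgue" "q \<in> borel_measurable lebesgue" "r \<in> borel_measurable lebesgue"
  using p_exponent q_exponent r_exponent by (auto simp: var_exponent_def)

lemma exponents_ge_1: "1 \<le> p x" "1 \<le> q x" "1 \<le> r x"
  using p_exponent q_exponent r_exponent by (auto simp: var_exponent_def)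

lemma r_finite: "r x < \<infinity>"
proof -
  have "0 < inverse (p x)"
    using p_finite[of x] exponents_ge_1(1)[of x] by (cases "p x") auto
  moreover have "0 \<le> inverse (q x)"
    using exponents_ge_1(2)[of x] by (cases "q x") auto
  ultimately have "0 < inverse (r x)"
    using inverse_exponent_sum[of x] by (simp add: add_pos_nonneg)
  then show ?thesis
    by (cases "r x") auto
qed

lemma r_eq_p_if_q_infinite: "q x = \<infinity> \<Longrightarrow> r x = p x"
  using inverse_exponent_sum[of x] exponents_ge_1[of x] r_finite[of x] p_finite[of x]
  by (cases "p x"; cases "r x") (auto split: if_splits)

lemma real_exponents_ge_1:
  "1 \<le> real_of_ereal (p x)" "1 \<le> real_of_ereal (r x)" "q x < \<infinity> \<Longrightarrow> 1 \<le> real_of_ereal (q x)"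
  using exponents_ge_1[of x] p_finite[of x] r_finite[of x]
  by (auto intro: real_of_ereal_exponent_ge_1)

lemma real_inverse_exponent_sum:
  "q x < \<infinity> \<Longrightarrow> 1 / real_of_ereal (r x) = 1 / real_of_ereal (p x) + 1 / real_of_ereal (q x)"
  using inverse_exponent_sum[of x] exponents_ge_1[of x] r_finite[of x] p_finite[of x]
  by (cases "p x"; cases "q x"; cases "r x") (auto split: if_splits simp: divide_inverse)

lemma half_product_powr_le:
  fixes u v :: real
  assumes "q x = \<infinity> \<longrightarrow> \<bar>v\<bar> \<le> 1"
  shows "2 * \<bar>u * v / 2\<bar> powr real_of_ereal (r x)
    \<le> \<bar>u\<bar> powr real_of_ereal (p x) + (if q x < \<infinity> then \<bar>v\<bar> powr real_of_ereal (q x) else 0)"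
proof -
  have "2 * \<bar>u * v / 2\<bar> powr real_of_ereal (r x) \<le> \<bar>u * v\<bar> powr real_of_ereal (r x)"
    using powr_half_le[of "\<bar>u * v\<bar>"] real_exponents_ge_1[of x] by simp
  also have "\<dots> \<le> \<bar>u\<bar> powr real_of_ereal (p x) + (if q x < \<infinity> then \<bar>v\<bar> powr real_of_ereal (q x) else 0)"
  proof (cases "q x < \<infinity>")
    case True
    then show ?thesis
      using young_powr[of "\<bar>u\<bar>" "\<bar>v\<bar>"] real_exponents_ge_1[of x] real_inverse_exponent_sum[of x]
      by (simp add: abs_mult)
  next
    case False
    then have "\<bar>u * v\<bar> \<le> \<bar>u\<bar>"
      using assms by (simp add: abs_mult mult_left_le)
    then show ?thesis
      using False r_eq_p_if_q_infinite[of x] real_exponents_ge_1[of x] by (simp add: powr_mono2)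
  qed
  finally show ?thesis .
qed

lemma var_modular_product_le_one:
  assumes [measurable]: "f \<in> borel_measurable lebesgue" "g \<in> borel_measurable lebesgue"
    and "var_modular p f \<le> 1" "var_modular q g \<le> 1"
  shows "var_modular r (\<lambda>x. f x * g x / 2) \<le> 1"
proof -
  define F where "F = (\<lambda>x. ennreal (\<bar>f x\<bar> powr real_of_ereal (p x)))"
  define G where "G = (\<lambda>x. ennreal (\<bar>g x\<bar> powr real_of_ereal (q x)) * indicator {x. q x < \<infinity>} x)"
  have [measurable]: "F \<in> borel_measurable lebesgue" "G \<in> borel_measurable lebesgue"
    unfolding F_def G_def by measurable
  have F_int: "integral\<^sup>N lebesgue F \<le> 1"
    using assms(3) unfolding F_def by (simp add: var_modular_finite_exponent[OF p_finite])
  have G_int: "integral\<^sup>N lebesgue G \<le> 1"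
    using assms(4) unfolding var_modular_def G_def
    by (rule order_trans[rotated]) (rule add_increasing2; simp)
  have "AE x in lebesgue. 2 * ennreal (\<bar>f x * g x / 2\<bar> powr real_of_ereal (r x)) \<le> F x + G x"
    using var_modular_le_one_AE_bounded[OF assms(4)]
  proof eventually_elim
    case (elim x)
    then have "ennreal (2 * \<bar>f x * g x / 2\<bar> powr real_of_ereal (r x))
        \<le> ennreal (\<bar>f x\<bar> powr real_of_ereal (p x)
          + (if q x < \<infinity> then \<bar>g x\<bar> powr real_of_ereal (q x) else 0))"
      by (intro ennreal_leI half_product_powr_le)
    then show ?case
      by (auto simp: F_def G_def ennreal_mult indicator_def)
  qed
  then have "2 * var_modular r (\<lambda>x. f x * g x / 2) \<le> integral\<^sup>N lebesgue F + integral\<^sup>N lebesgue G"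
    by (simp add: var_modular_finite_exponent[OF r_finite] nn_integral_cmult[symmetric]
        nn_integral_add[symmetric] nn_integral_mono_AE)
  also have "\<dots> \<le> 2 * 1"
    using add_mono[OF F_int G_int] by simp
  finally show ?thesis
    by (subst (asm) ennreal_mult_le_mult_iff) auto
qed

lemma var_norm_mult_le:
  assumes [measurable]: "f \<in> borel_measurable lebesgue" "g \<in> borel_measurable lebesgue"
    and "var_norm q g \<le> 1"
  shows "var_norm r (\<lambda>x. f x * g x) \<le> 2 * var_norm p f"
proof -
  have "var_norm r (\<lambda>x. f x * g x) \<le> ennreal (2 * a)"
    if "0 < a" "var_norm p f < ennreal a" for a
  proof -
    have "var_norm r (\<lambda>x. f x * g x) \<le> ennreal (2 * a) * var_norm q g"
    proof (rule ennreal_le_mult_of_forall_greater)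
      fix b
      assume "0 < b" "var_norm q g < ennreal b"
      then have "var_modular r (\<lambda>x. (f x / a) * (g x / b) / 2) \<le> 1"
        using that p_exponent q_exponent
        by (intro var_modular_product_le_one var_modular_le_one_of_norm_less) auto
      moreover have "(\<lambda>x. (f x / a) * (g x / b) / 2) = (\<lambda>x. f x * g x / (2 * a * b))"
        by auto
      ultimately show "var_norm r (\<lambda>x. f x * g x) \<le> ennreal (2 * a * b)"
        using \<open>0 < a\<close> \<open>0 < b\<close> by (intro var_norm_le_of_modular) auto
    qed (use that in simp)
    also have "\<dots> \<le> ennreal (2 * a)"
      using assms(3) mult_left_mono[of "var_norm q g" 1 "ennreal (2 * a)"] by simp
    finally show ?thesis .
  qed
  then have "var_norm r (\<lambda>x. f x * g x) \<le> ennreal 2 * var_norm p f"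
    by (intro ennreal_le_mult_of_forall_greater) auto
  then show ?thesis
    by simp
qed

lemma var_norm_star_ge_on_infinite_part:
  assumes [measurable]: "f \<in> borel_measurable lebesgue" "B \<in> sets lebesgue"
    and "B \<subseteq> {x. q x = \<infinity>}" "0 < \<mu>" "0 < c" "c \<le> 1"
    and "ennreal c \<le> (\<integral>\<^sup>+x\<in>B. ennreal (\<bar>f x / \<mu>\<bar> powr real_of_ereal (p x)) \<partial>lebesgue)"
  shows "ennreal (c * \<mu>) \<le> var_norm_star q r f"
proof -
  have "ennreal (c * \<mu>) \<le> var_norm r (\<lambda>x. f x * indicator B x)"
  proof (rule var_norm_ge_of_modular[OF r_exponent r_finite _ assms(4-6)])
    have "var_modular r (\<lambda>x. f x * indicator B x / \<mu>)
        = (\<integral>\<^sup>+x\<in>B. ennreal (\<bar>f x / \<mu>\<bar> powr real_of_ereal (p x)) \<partial>lebesgue)"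
      unfolding var_modular_finite_exponent[OF r_finite]
      using assms(3) r_eq_p_if_q_infinite by (intro nn_integral_cong) (auto simp: indicator_def)
    then show "ennreal c \<le> var_modular r (\<lambda>x. f x * indicator B x / \<mu>)"
      using assms(7) by simp
  qed measurable
  then show ?thesis
    using var_norm_mult_le_var_norm_star[of "indicator B" q r f]
      var_norm_indicator_le_one[OF q_exponent assms(2,3)]
    by simp
qed

lemma dual_witness_powr_ge:
  fixes t S :: real
  assumes "0 \<le> t" "0 < S" "q x < \<infinity>"
  shows "min 1 (1 / S) * t powr real_of_ereal (p x)
    \<le> (t * (t powr real_of_ereal (p x) / S) powr (1 / real_of_ereal (q x))) powr real_of_ereal (r x)"
proof -
  have "1 / real_of_ereal (q x) \<le> 1 / real_of_ereal (r x)"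
    using assms(3) real_exponents_ge_1[of x] real_inverse_exponent_sum[of x] by simp
  then have ratio: "0 \<le> real_of_ereal (r x) / real_of_ereal (q x)"
    "real_of_ereal (r x) / real_of_ereal (q x) \<le> 1"
    using assms(3) real_exponents_ge_1[of x] by (auto simp: divide_simps)
  have "min 1 (1 / S) * t powr real_of_ereal (p x)
      \<le> t powr real_of_ereal (p x) * S powr (- (real_of_ereal (r x) / real_of_ereal (q x)))"
    using mult_right_mono[OF min_le_powr_neg[OF \<open>0 < S\<close> ratio], of "t powr real_of_ereal (p x)"]
    by (simp add: mult.commute)
  also have "\<dots> = (t * (t powr real_of_ereal (p x) / S) powr (1 / real_of_ereal (q x))) powr real_of_ereal (r x)"
    using assms real_exponents_ge_1[of x] real_inverse_exponent_sum[of x]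
    by (intro powr_mult_dual_powr[symmetric]) auto
  finally show ?thesis .
qed

lemma var_norm_star_ge_on_finite_part:
  assumes [measurable]: "f \<in> borel_measurable lebesgue" "A \<in> sets lebesgue"
    and "A \<subseteq> {x. q x < \<infinity>}" "0 < \<mu>" "0 < c" "c \<le> 1"
    and "ennreal c \<le> (\<integral>\<^sup>+x\<in>A. ennreal (\<bar>f x / \<mu>\<bar> powr real_of_ereal (p x)) \<partial>lebesgue)"
    and "(\<integral>\<^sup>+x\<in>A. ennreal (\<bar>f x / \<mu>\<bar> powr real_of_ereal (p x)) \<partial>lebesgue) < \<infinity>"
  shows "ennreal (c * \<mu>) \<le> var_norm_star q r f"
proof -
  define F where "F = (\<lambda>x. \<bar>f x / \<mu>\<bar> powr real_of_ereal (p x))"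
  have "(\<integral>\<^sup>+x\<in>A. ennreal (F x) \<partial>lebesgue) < \<infinity>"
    using assms(8) by (simp add: F_def)
  then obtain S where S: "(\<integral>\<^sup>+x\<in>A. ennreal (F x) \<partial>lebesgue) = ennreal S" "0 \<le> S"
    by (cases "\<integral>\<^sup>+x\<in>A. ennreal (F x) \<partial>lebesgue") auto
  have "c \<le> S"
    using assms(7) S by (simp add: F_def)
  then have "0 < S"
    using assms(5) by simp
  \<comment> \<open>the equality case of Young's inequality, normalized to q-modular 1\<close>
  define g where "g = (\<lambda>x. indicator A x * (F x / S) powr (1 / real_of_ereal (q x)))"
  have [measurable]: "F \<in> borel_measurable lebesgue" "g \<in> borel_measurable lebesgue"
    unfolding F_def g_def by measurable
  have pointwise: "min 1 (1 / S) * F x \<le> \<bar>f x * g x / \<mu>\<bar> powr real_of_ereal (r x)" if "x \<in> A" for x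
    using that assms(3) dual_witness_powr_ge[OF abs_ge_zero \<open>0 < S\<close>, of x "f x / \<mu>"]
    by (auto simp: F_def g_def abs_mult)
  have "var_norm q g \<le> 1"
    unfolding g_def using q_exponent assms(3) \<open>0 < S\<close> S
    by (intro var_norm_dual_witness_le_one) (auto simp: F_def)
  moreover have "ennreal (c * \<mu>) \<le> var_norm r (\<lambda>x. f x * g x)"
  proof (rule var_norm_ge_of_modular[OF r_exponent r_finite _ assms(4-6)])
    have "ennreal c \<le> ennreal (min 1 (1 / S) * S)"
      using assms(6) \<open>c \<le> S\<close> \<open>0 < S\<close> by (intro ennreal_leI) (auto simp: min_def)
    also have "\<dots> = (\<integral>\<^sup>+ x. ennreal (min 1 (1 / S)) * (ennreal (F x) * indicator A x) \<partial>lebesgue)"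
      using S \<open>0 < S\<close> by (simp add: nn_integral_cmult ennreal_mult)
    also have "\<dots> \<le> (\<integral>\<^sup>+ x. ennreal (\<bar>f x * g x / \<mu>\<bar> powr real_of_ereal (r x)) \<partial>lebesgue)"
      using pointwise \<open>0 < S\<close> by (intro nn_integral_mono) (auto simp: indicator_def ennreal_mult'[symmetric])
    finally show "ennreal c \<le> var_modular r (\<lambda>x. f x * g x / \<mu>)"
      by (simp add: var_modular_finite_exponent[OF r_finite])
  qed measurable
  ultimately show ?thesis
    using var_norm_mult_le_var_norm_star[of g q r f] by simp
qed

lemma var_norm_star_ge_half:
  assumes [measurable]: "f \<in> borel_measurable lebesgue" and "0 < \<mu>" "ennreal \<mu> < var_norm p f"
  shows "ennreal (1/2 * \<mu>) \<le> var_norm_star q r f"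
proof -
  define F where "F = (\<lambda>x. \<bar>f x / \<mu>\<bar> powr real_of_ereal (p x))"
  have [measurable]: "F \<in> borel_measurable lebesgue"
    unfolding F_def by measurable
  have "1 < (\<integral>\<^sup>+x. ennreal (F x) \<partial>lebesgue)"
  proof (rule ccontr)
    assume "\<not> ?thesis"
    then have "var_norm p f \<le> ennreal \<mu>"
      using \<open>0 < \<mu>\<close> by (intro var_norm_le_of_modular)
        (simp_all add: F_def var_modular_finite_exponent[OF p_finite] not_less)
    then show False
      using assms(3) by simp
  qed
  then obtain E where [measurable]: "E \<in> sets lebesgue"
    and E: "1 < (\<integral>\<^sup>+x\<in>E. ennreal (F x) \<partial>lebesgue)" "(\<integral>\<^sup>+x\<in>E. ennreal (F x) \<partial>lebesgue) < \<infinity>"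
    using nn_integral_gt_restrict_finite[of F 1] by auto
  define A where "A = E \<inter> {x. q x < \<infinity>}"
  define B where "B = E \<inter> {x. q x = \<infinity>}"
  have [measurable]: "A \<in> sets lebesgue" "B \<in> sets lebesgue"
    unfolding A_def B_def by measurable
  have "A \<union> B = E" "A \<inter> B = {}"
    by (auto simp: A_def B_def less_top)
  then have "ennreal (1/2) \<le> (\<integral>\<^sup>+x\<in>A. ennreal (F x) \<partial>lebesgue) \<or> ennreal (1/2) \<le> (\<integral>\<^sup>+x\<in>B. ennreal (F x) \<partial>lebesgue)"
    using nn_integral_half_on_part[of "\<lambda>x. ennreal (F x)" lebesgue A B] E(1) by simp
  moreover have "(\<integral>\<^sup>+x\<in>A. ennreal (F x) \<partial>lebesgue) \<le> (\<integral>\<^sup>+x\<in>E. ennreal (F x) \<partial>lebesgue)"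
    by (intro nn_integral_mono) (auto simp: A_def indicator_def)
  then have "(\<integral>\<^sup>+x\<in>A. ennreal (F x) \<partial>lebesgue) < \<infinity>"
    using E(2) by (rule le_less_trans)
  ultimately show ?thesis
    using \<open>0 < \<mu>\<close> var_norm_star_ge_on_finite_part[of f A \<mu> "1/2"]
      var_norm_star_ge_on_infinite_part[of f B \<mu> "1/2"]
    by (auto simp: A_def B_def F_def)
qed

lemma var_norm_le_two_var_norm_star:
  assumes "f \<in> borel_measurable lebesgue"
  shows "var_norm p f \<le> 2 * var_norm_star q r f"
proof (rule dense_le)
  fix y
  assume "y < var_norm p f"
  then obtain \<mu> where "y = ennreal \<mu>" "0 \<le> \<mu>"
    by (cases y) auto
  show "y \<le> 2 * var_norm_star q r f"
  proof (cases "\<mu> = 0")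
    case False
    then have "ennreal (1/2 * \<mu>) \<le> var_norm_star q r f"
      using assms \<open>y < var_norm p f\<close> \<open>y = ennreal \<mu>\<close> \<open>0 \<le> \<mu>\<close>
      by (intro var_norm_star_ge_half) auto
    then have "2 * ennreal (1/2 * \<mu>) \<le> 2 * var_norm_star q r f"
      by (rule mult_left_mono) simp
    then show ?thesis
      using \<open>y = ennreal \<mu>\<close> \<open>0 \<le> \<mu>\<close>
      by (simp add: ennreal_numeral[symmetric] ennreal_mult[symmetric] del: ennreal_numeral)
  qed (simp add: \<open>y = ennreal \<mu>\<close>)
qed

lemma var_norm_star_le_two_var_norm:
  assumes "f \<in> borel_measurable lebesgue"
  shows "var_norm_star q r f \<le> 2 * var_norm p f"
  unfolding var_norm_star_def using assms by (intro SUP_least) (auto intro: var_norm_mult_le)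

end

theorem mainTheorem10:
  fixes p q r :: "'a::euclidean_space \<Rightarrow> ereal"
  assumes "var_exponent p" and "var_exponent q" and "var_exponent r"
    and "\<And>x. inverse (r x) = inverse (p x) + inverse (q x)"
    and "(\<forall>x. r x < p x \<and> p x < \<infinity>) \<or>
         ((\<forall>x. r x \<le> p x \<and> p x < \<infinity>) \<and> esssup lebesgue r < \<infinity>)"
  shows "\<exists>c1 c2 :: real. 0 < c1 \<and> 0 < c2 \<and>
           (\<forall>f. f \<in> borel_measurable lebesgue \<longrightarrow>
              ennreal c1 * var_norm p f \<le> var_norm_star q r f \<and>
              var_norm_star q r f \<le> ennreal c2 * var_norm p f)"
proof -
  \<comment> \<open>of the last hypothesis only the finiteness of p is needed\<close>
  interpret holder_triple p q r
    using assms by unfold_locales auto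
  have half_two: "ennreal (1/2) * 2 = 1"
    by (subst ennreal_numeral[symmetric], subst ennreal_mult[symmetric]) auto
  have "ennreal (1/2) * var_norm p f \<le> var_norm_star q r f"
    if "f \<in> borel_measurable lebesgue" for f
  proof -
    have "ennreal (1/2) * var_norm p f \<le> ennreal (1/2) * (2 * var_norm_star q r f)"
      using var_norm_le_two_var_norm_star[OF that] by (rule mult_left_mono) simp
    also have "\<dots> = var_norm_star q r f"
      using half_two by (simp only: mult.assoc[symmetric] mult_1)
    finally show ?thesis .
  qed
  then show ?thesis
    using var_norm_star_le_two_var_norm by (intro exI[of _ "1/2"] exI[of _ 2]) auto
qed

end
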